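(* Let $\mathcal{A}$ be a central S-ring over a finite group $G$. Then $\mathcal{A}$ is primitive if and only if its rational closure $\mathrm{tr}(\mathcal{A})$ is primitive.
   Context: For a finite group $G$ with identity $e$ and $X\subseteq G$, write $\underline{X}=\sum_{x\in X}x\in\mathbb{Z}G$. A subring $\mathcal{A}$ of $\mathbb{Z}G$ is an S-ring over $G$ if there is a partition $\mathcal{S}(\mathcal{A})$ of $G$ (basic sets) such that $\{e\}\in\mathcal{S}(\mathcal{A})$, $X\in\mathcal{S}(\mathcal{A})\Rightarrow X^{-1}\in\mathcal{S}(\mathcal{A})$, and $\mathcal{A}$ is the $\mathbb{Z}$-span of $\{\underline{X}: X\in\mathcal{S}(\mathcal{A})\}$. An $\mathcal{A}$-subgroup is a subgroup of $G$ that is a union of basic sets; $\mathcal{A}$ is primitive if its only $\mathcal{A}$-subgroups are $\{e\}$ and $G$. $\mathcal{A}$ is central if $\mathcal{A}\subseteq\mathcal{Z}(\mathbb{Z}G)$. For an integer $m$, $X^{(m)}=\{x^m:x\in X\}$; the trace of $X$ is $\mathrm{tr}(X)=\bigcup_{\gcd(m,|G|)=1}X^{(m)}$. The rational closure of a central S-ring $\mathcal{A}$ is $\mathrm{tr}(\mathcal{A})=\mathrm{Span}_{\mathbb{Z}}\{\underline{\mathrm{tr}(X)}: X\in\mathcal{S}(\mathcal{A})\}$, which is a central S-ring over $G$ with basic sets $\mathrm{tr}(X)$, $X\in\mathcal{S}(\mathcal{A})$. *)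

theory Defs
  imports "HOL-Algebra.Algebra"
begin

text \<open>The integral group ring ZG of a finite group G is modelled as integer-valued
  functions on the carrier (zero outside the carrier); multiplication is convolution.\<close>

definition gr_mult :: "('a, 'b) monoid_scheme \<Rightarrow> ('a \<Rightarrow> int) \<Rightarrow> ('a \<Rightarrow> int) \<Rightarrow> ('a \<Rightarrow> int)" where
  "gr_mult G f h = (\<lambda>g. if g \<in> carrier G
      then (\<Sum>x\<in>carrier G. f x * h (inv\<^bsub>G\<^esub> x \<otimes>\<^bsub>G\<^esub> g)) else 0)"

definition group_ring :: "('a, 'b) monoid_scheme \<Rightarrow> ('a \<Rightarrow> int) set" where
  "group_ring G = {f. \<forall>g. g \<notin> carrier G \<longrightarrow> f g = 0}"

definition setsum_elt :: "'a set \<Rightarrow> ('a \<Rightarrow> int)" where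
  "setsum_elt A = (\<lambda>y. if y \<in> A then 1 else 0)"

definition span_basic :: "'a set set \<Rightarrow> ('a \<Rightarrow> int) set" where
  "span_basic S = {f. \<exists>a :: 'a set \<Rightarrow> int. f = (\<lambda>g. \<Sum>B\<in>S. a B * setsum_elt B g)}"

definition is_partition_of :: "'a set set \<Rightarrow> 'a set \<Rightarrow> bool" where
  "is_partition_of S A \<longleftrightarrow> (\<forall>B\<in>S. B \<noteq> {} \<and> B \<subseteq> A)
      \<and> (\<forall>B\<in>S. \<forall>C\<in>S. B \<noteq> C \<longrightarrow> B \<inter> C = {}) \<and> \<Union>S = A"

text \<open>An S-ring over G, given by its partition S of basic sets; the ring itself is
  the Z-span of the B-bar, required to be a subring of ZG.\<close>
definition S_ring :: "('a, 'b) monoid_scheme \<Rightarrow> 'a set set \<Rightarrow> bool" where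
  "S_ring G S \<longleftrightarrow> is_partition_of S (carrier G)
     \<and> {\<one>\<^bsub>G\<^esub>} \<in> S
     \<and> (\<forall>B\<in>S. (\<lambda>x. inv\<^bsub>G\<^esub> x) ` B \<in> S)
     \<and> (\<forall>f\<in>span_basic S. \<forall>h\<in>span_basic S. gr_mult G f h \<in> span_basic S)"

definition central_S_ring :: "('a, 'b) monoid_scheme \<Rightarrow> 'a set set \<Rightarrow> bool" where
  "central_S_ring G S \<longleftrightarrow> S_ring G S
     \<and> (\<forall>f\<in>span_basic S. \<forall>h\<in>group_ring G. gr_mult G f h = gr_mult G h f)"

definition S_subgroup :: "('a, 'b) monoid_scheme \<Rightarrow> 'a set set \<Rightarrow> 'a set \<Rightarrow> bool" where
  "S_subgroup G S H \<longleftrightarrow> subgroup H G \<and> (\<exists>T\<subseteq>S. H = \<Union>T)"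

definition S_primitive :: "('a, 'b) monoid_scheme \<Rightarrow> 'a set set \<Rightarrow> bool" where
  "S_primitive G S \<longleftrightarrow> (\<forall>H. S_subgroup G S H \<longrightarrow> H = {\<one>\<^bsub>G\<^esub>} \<or> H = carrier G)"

definition set_pow :: "('a, 'b) monoid_scheme \<Rightarrow> 'a set \<Rightarrow> int \<Rightarrow> 'a set" where
  "set_pow G B m = (\<lambda>x. x [^]\<^bsub>G\<^esub> m) ` B"

definition trace :: "('a, 'b) monoid_scheme \<Rightarrow> 'a set \<Rightarrow> 'a set" where
  "trace G B = (\<Union>m\<in>{m::int. coprime m (int (order G))}. set_pow G B m)"

definition rational_closure :: "('a, 'b) monoid_scheme \<Rightarrow> 'a set set \<Rightarrow> 'a set set" where
  "rational_closure G S = trace G ` S"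

end

theory Submission
  imports Defs
begin

text \<open>Since a subgroup is closed under powers, the trace of a basic set inside an
  \<open>\<A>\<close>-subgroup stays inside it, so every \<open>\<A>\<close>-subgroup is a \<open>tr(\<A>)\<close>-subgroup.
  Conversely, by Schur's argument the subgroup generated by a basic set \<open>W\<close> of \<open>\<A>\<close>
  is an \<open>\<A>\<close>-subgroup: the coefficients of \<open>W\<^sup>n\<close> (a product in \<open>\<A>\<close>) are constant on
  basic sets, so the set product \<open>W\<^sup>n\<close> is a union of basic sets. A nontrivial
  \<open>tr(\<A>)\<close>-subgroup contains \<open>tr(W) \<supseteq> W\<close> for some \<open>W \<noteq> {e}\<close>, hence, if \<open>\<A>\<close> is
  primitive, the whole group.\<close>

definition S_closed :: "('a, 'b) monoid_scheme \<Rightarrow> 'a set set \<Rightarrow> 'a set \<Rightarrow> bool" where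
  "S_closed G S Y \<longleftrightarrow> Y \<subseteq> carrier G \<and> (\<forall>B\<in>S. B \<inter> Y \<noteq> {} \<longrightarrow> B \<subseteq> Y)"

primrec set_mult_pow :: "('a, 'b) monoid_scheme \<Rightarrow> 'a set \<Rightarrow> nat \<Rightarrow> 'a set" where
  "set_mult_pow G W 0 = {\<one>\<^bsub>G\<^esub>}"
| "set_mult_pow G W (Suc n) = set_mult_pow G W n <#>\<^bsub>G\<^esub> W"

context group
begin

lemma set_mult_pow_closed:
  assumes "W \<subseteq> carrier G"
  shows "set_mult_pow G W n \<subseteq> carrier G"
  by (induction n) (simp_all add: assms setmult_subset_G)

lemma set_mult_pow_add:
  assumes "W \<subseteq> carrier G"
  shows "set_mult_pow G W (m + n) = set_mult_pow G W m <#> set_mult_pow G W n"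
proof (induction n)
  case 0
  show ?case
    using coset_mult_one[OF set_mult_pow_closed[OF assms]] by (simp add: r_coset_eq_set_mult)
next
  case (Suc n)
  then show ?case
    using set_mult_assoc[OF set_mult_pow_closed[OF assms] set_mult_pow_closed[OF assms] assms]
    by simp
qed

lemma set_mult_pow_subset_subgroup:
  assumes "subgroup H G" "W \<subseteq> H"
  shows "set_mult_pow G W n \<subseteq> H"
  by (induction n) (use assms in \<open>auto simp: set_mult_def subgroup.one_closed
      intro: subgroup.m_closed[OF assms(1)]\<close>)

lemma inv_eq_nat_pow_ord:
  assumes "finite (carrier G)" "a \<in> carrier G"
  shows "inv a = a [^] (ord a - 1)"
proof (rule inv_equality)
  have "Suc (ord a - 1) = ord a"
    using ord_ge_1[OF assms] by simp
  then show "a [^] (ord a - 1) \<otimes> a = \<one>"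
    using pow_ord_eq_1[OF assms(2)] nat_pow_Suc[of a "ord a - 1"] by simp
qed (use assms in simp_all)

text \<open>In a finite group, inverses are positive powers, so the monoid generated by \<open>W\<close>
  is already a subgroup.\<close>
lemma subgroup_Union_set_mult_pow:
  assumes "finite (carrier G)" "W \<subseteq> carrier G"
  shows "subgroup (\<Union>n. set_mult_pow G W n) G"
proof -
  let ?U = "\<Union>n. set_mult_pow G W n"
  have carrier: "?U \<subseteq> carrier G"
    using set_mult_pow_closed[OF assms(2)] by blast
  have mult: "a \<otimes> b \<in> ?U" if a: "a \<in> ?U" and b: "b \<in> ?U" for a b
  proof -
    obtain m n where "a \<in> set_mult_pow G W m" "b \<in> set_mult_pow G W n"
      using a b by blast
    then have "a \<otimes> b \<in> set_mult_pow G W (m + n)"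
      unfolding set_mult_pow_add[OF assms(2)] set_mult_def by blast
    then show ?thesis
      by blast
  qed
  have one: "\<one> \<in> ?U"
    using UN_I[of 0 UNIV \<one> "set_mult_pow G W"] by simp
  have pow: "a [^] m \<in> ?U" if "a \<in> ?U" for a and m :: nat
  proof (induction m)
    case 0
    show ?case
      using one by simp
  next
    case (Suc m)
    then show ?case
      using mult[OF _ that] by simp
  qed
  show ?thesis
  proof (rule subgroupI)
    show "inv a \<in> ?U" if "a \<in> ?U" for a
      using that pow carrier inv_eq_nat_pow_ord[OF assms(1)] by (simp add: subset_iff)
    show "?U \<noteq> {}"
      using one by blast
  qed (use carrier mult in simp_all)
qed

lemma subset_trace:
  assumes "W \<subseteq> carrier G"
  shows "W \<subseteq> trace G W"
proof
  fix x assume "x \<in> W"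
  then have "x = x [^] (1::int)"
    using assms by auto
  then have "x \<in> set_pow G W 1"
    unfolding set_pow_def using \<open>x \<in> W\<close> by (rule image_eqI)
  then show "x \<in> trace G W"
    unfolding trace_def by (rule UN_I[rotated]) simp
qed

lemma trace_subset_subgroup:
  assumes "subgroup H G" "W \<subseteq> H"
  shows "trace G W \<subseteq> H"
  using assms subgroup_int_pow_closed unfolding trace_def set_pow_def by auto

lemma trace_one: "trace G {\<one>} = {\<one>}"
  unfolding trace_def set_pow_def by (auto intro!: exI[of _ 1])

lemma Union_trace_eq_subgroup:
  assumes "subgroup H G" "H = \<Union>T" "\<forall>B\<in>T. B \<subseteq> carrier G"
  shows "\<Union>(trace G ` T) = H"
proof
  show "\<Union>(trace G ` T) \<subseteq> H"
    using trace_subset_subgroup[OF assms(1)] assms(2) by (simp add: UN_subset_iff Sup_upper)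
  show "H \<subseteq> \<Union>(trace G ` T)"
    using subset_trace assms(2,3) by (auto simp: subset_iff)
qed

end

locale finite_S_ring = group G for G :: "('a, 'b) monoid_scheme" (structure) +
  fixes S :: "'a set set"
  assumes finite_carrier: "finite (carrier G)"
    and S_ring: "S_ring G S"
begin

lemma basic_sets_partition: "is_partition_of S (carrier G)"
  using S_ring unfolding S_ring_def by (rule conjunct1)

lemma one_basic: "{\<one>} \<in> S"
  using S_ring unfolding S_ring_def by (elim conjE)

lemma basic_subset_carrier: "B \<in> S \<Longrightarrow> B \<subseteq> carrier G"
  using basic_sets_partition unfolding is_partition_of_def by blast

lemma basic_nonempty: "B \<in> S \<Longrightarrow> B \<noteq> {}"
  using basic_sets_partition unfolding is_partition_of_def by blast

lemma basic_disjoint: "B \<in> S \<Longrightarrow> C \<in> S \<Longrightarrow> B \<noteq> C \<Longrightarrow> B \<inter> C = {}"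
  using basic_sets_partition unfolding is_partition_of_def by blast

lemma basic_cover: "g \<in> carrier G \<Longrightarrow> \<exists>B\<in>S. g \<in> B"
  using basic_sets_partition unfolding is_partition_of_def by blast

lemma finite_S: "finite S"
proof (rule finite_subset)
  show "S \<subseteq> Pow (carrier G)"
    using basic_subset_carrier by blast
qed (simp add: finite_carrier)

lemma span_basic_apply:
  assumes "B0 \<in> S" "g \<in> B0"
  shows "(\<Sum>B\<in>S. a B * setsum_elt B g) = a B0"
proof -
  have "a B * setsum_elt B g = (if B = B0 then a B0 else 0)" if "B \<in> S" for B
    using basic_disjoint[OF that assms(1)] assms(2) by (auto simp: setsum_elt_def)
  then show ?thesis
    using assms(1) finite_S by (simp add: sum.delta)
qed

lemma span_basic_constant_on_basic:
  assumes "f \<in> span_basic S" "B \<in> S" "g \<in> B" "g' \<in> B"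
  shows "f g = f g'"
  using assms span_basic_apply unfolding span_basic_def by auto

lemma setsum_elt_in_span_basic:
  assumes "S_closed G S Y"
  shows "setsum_elt Y \<in> span_basic S"
proof -
  define a where "a B = (if B \<subseteq> Y then 1 else 0 :: int)" for B
  have "setsum_elt Y g = (\<Sum>B\<in>S. a B * setsum_elt B g)" for g
  proof (cases "g \<in> carrier G")
    case True
    then obtain B0 where "B0 \<in> S" "g \<in> B0"
      using basic_cover by blast
    moreover have "B0 \<subseteq> Y \<longleftrightarrow> g \<in> Y"
      using assms \<open>B0 \<in> S\<close> \<open>g \<in> B0\<close> unfolding S_closed_def by blast
    ultimately show ?thesis
      using span_basic_apply by (simp add: a_def setsum_elt_def)
  next
    case False
    then have "g \<notin> Y" "\<forall>B\<in>S. g \<notin> B"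
      using assms basic_subset_carrier unfolding S_closed_def by auto
    then show ?thesis
      by (simp add: setsum_elt_def)
  qed
  then show ?thesis
    unfolding span_basic_def by blast
qed

text \<open>The coefficients of a product of two 0-1 elements are nonnegative, so the support
  of the product is exactly the set product.\<close>
lemma gr_mult_setsum_elt_nonzero_iff:
  assumes "Y \<subseteq> carrier G" "Z \<subseteq> carrier G" "g \<in> carrier G"
  shows "gr_mult G (setsum_elt Y) (setsum_elt Z) g \<noteq> 0 \<longleftrightarrow> g \<in> Y <#> Z"
proof -
  have "gr_mult G (setsum_elt Y) (setsum_elt Z) g \<noteq> 0
      \<longleftrightarrow> (\<exists>x\<in>carrier G. setsum_elt Y x * setsum_elt Z (inv x \<otimes> g) \<noteq> 0)"
    using assms(3) sum_nonneg_eq_0_iff[OF finite_carrier,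
        of "\<lambda>x. setsum_elt Y x * setsum_elt Z (inv x \<otimes> g)"]
    by (auto simp: gr_mult_def setsum_elt_def)
  also have "\<dots> \<longleftrightarrow> (\<exists>x\<in>Y. inv x \<otimes> g \<in> Z)"
    using assms(1) by (auto simp: setsum_elt_def)
  also have "\<dots> \<longleftrightarrow> (\<exists>x\<in>Y. \<exists>z\<in>Z. g = x \<otimes> z)"
  proof
    assume "\<exists>x\<in>Y. inv x \<otimes> g \<in> Z"
    then obtain x where "x \<in> Y" "inv x \<otimes> g \<in> Z"
      by blast
    moreover have "g = x \<otimes> (inv x \<otimes> g)"
      using \<open>x \<in> Y\<close> assms(1,3) by (simp add: m_assoc[symmetric] subsetD)
    ultimately show "\<exists>x\<in>Y. \<exists>z\<in>Z. g = x \<otimes> z"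
      by blast
  next
    assume "\<exists>x\<in>Y. \<exists>z\<in>Z. g = x \<otimes> z"
    then obtain x z where "x \<in> Y" "z \<in> Z" "g = x \<otimes> z"
      by blast
    moreover have "inv x \<otimes> (x \<otimes> z) = z"
      using \<open>x \<in> Y\<close> \<open>z \<in> Z\<close> assms(1,2) by (simp add: m_assoc[symmetric] subsetD)
    ultimately show "\<exists>x\<in>Y. inv x \<otimes> g \<in> Z"
      by (intro bexI[of _ x]) simp_all
  qed
  also have "\<dots> \<longleftrightarrow> g \<in> Y <#> Z"
    unfolding set_mult_def by blast
  finally show ?thesis .
qed

lemma S_closed_set_mult:
  assumes "S_closed G S Y" "S_closed G S Z"
  shows "S_closed G S (Y <#> Z)"
proof -
  have YZ: "Y \<subseteq> carrier G" "Z \<subseteq> carrier G"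
    using assms unfolding S_closed_def by auto
  let ?f = "gr_mult G (setsum_elt Y) (setsum_elt Z)"
  have "\<forall>f\<in>span_basic S. \<forall>h\<in>span_basic S. gr_mult G f h \<in> span_basic S"
    using S_ring unfolding S_ring_def by (elim conjE)
  then have f: "?f \<in> span_basic S"
    using setsum_elt_in_span_basic[OF assms(1)] setsum_elt_in_span_basic[OF assms(2)] by simp
  have "B \<subseteq> Y <#> Z" if B: "B \<in> S" "B \<inter> (Y <#> Z) \<noteq> {}" for B
  proof
    fix g' assume "g' \<in> B"
    obtain g where "g \<in> B" "g \<in> Y <#> Z"
      using B(2) by blast
    then have "?f g \<noteq> 0"
      using gr_mult_setsum_elt_nonzero_iff[OF YZ] basic_subset_carrier[OF B(1)] by blast
    moreover have "?f g = ?f g'"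
      using span_basic_constant_on_basic[OF f B(1) \<open>g \<in> B\<close> \<open>g' \<in> B\<close>] .
    ultimately show "g' \<in> Y <#> Z"
      using gr_mult_setsum_elt_nonzero_iff[OF YZ] basic_subset_carrier[OF B(1)] \<open>g' \<in> B\<close> by auto
  qed
  then show ?thesis
    using setmult_subset_G[OF YZ] unfolding S_closed_def by blast
qed

lemma S_closed_basic: "W \<in> S \<Longrightarrow> S_closed G S W"
  using basic_subset_carrier basic_disjoint unfolding S_closed_def by blast

lemma S_closed_set_mult_pow:
  assumes "W \<in> S"
  shows "S_closed G S (set_mult_pow G W n)"
proof (induction n)
  case 0
  show ?case
    using S_closed_basic[OF one_basic] by simp
next
  case (Suc n)
  then show ?case
    using S_closed_set_mult S_closed_basic[OF assms] by simp
qed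

lemma S_closed_UN: "(\<And>n. S_closed G S (Y n)) \<Longrightarrow> S_closed G S (\<Union>n. Y n)"
  unfolding S_closed_def by (auto simp: disjoint_iff) (meson subsetD)

lemma S_subgroupI:
  assumes "subgroup H G" "S_closed G S H"
  shows "S_subgroup G S H"
proof -
  have "H \<subseteq> \<Union>{B\<in>S. B \<subseteq> H}"
  proof
    fix h assume "h \<in> H"
    then obtain B where "B \<in> S" "h \<in> B"
      using basic_cover subgroup.mem_carrier[OF assms(1)] by blast
    moreover have "B \<subseteq> H"
      using assms(2) calculation \<open>h \<in> H\<close> unfolding S_closed_def by blast
    ultimately show "h \<in> \<Union>{B\<in>S. B \<subseteq> H}"
      by blast
  qed
  then have "H = \<Union>{B\<in>S. B \<subseteq> H}"
    by blast
  then show ?thesis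
    unfolding S_subgroup_def using assms(1) by (intro conjI exI[of _ "{B\<in>S. B \<subseteq> H}"]) auto
qed

lemma S_subgroup_generated_by_basic:
  assumes "W \<in> S"
  shows "S_subgroup G S (\<Union>n. set_mult_pow G W n)"
  using subgroup_Union_set_mult_pow[OF finite_carrier basic_subset_carrier[OF assms]]
    S_closed_UN[OF S_closed_set_mult_pow[OF assms]] by (rule S_subgroupI)

lemma S_primitive_basic_generates:
  assumes "S_primitive G S" "W \<in> S" "W \<noteq> {\<one>}" "subgroup H G" "W \<subseteq> H"
  shows "H = carrier G"
proof -
  let ?U = "\<Union>n. set_mult_pow G W n"
  have "W \<subseteq> set_mult_pow G W (Suc 0)"
    using basic_subset_carrier[OF assms(2)] by (force simp: set_mult_def)
  then have "W \<subseteq> ?U"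
    by blast
  moreover obtain w where "w \<in> W" "w \<noteq> \<one>"
    using basic_nonempty[OF assms(2)] assms(3) by blast
  ultimately have "?U \<noteq> {\<one>}"
    by blast
  then have "?U = carrier G"
    using assms(1) S_subgroup_generated_by_basic[OF assms(2)] unfolding S_primitive_def by blast
  moreover have "?U \<subseteq> H"
    using set_mult_pow_subset_subgroup[OF assms(4,5)] by (simp add: UN_subset_iff)
  ultimately show ?thesis
    using subgroup.subset[OF assms(4)] by simp
qed

lemma S_subgroup_rational_closure:
  assumes "S_subgroup G S H"
  shows "S_subgroup G (rational_closure G S) H"
proof -
  obtain T where T: "subgroup H G" "T \<subseteq> S" "H = \<Union>T"
    using assms unfolding S_subgroup_def by blast
  then have "H = \<Union>(trace G ` T)"
    using Union_trace_eq_subgroup[OF T(1,3)] basic_subset_carrier by auto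
  then show ?thesis
    unfolding S_subgroup_def rational_closure_def using T(1,2)
    by (intro conjI exI[of _ "trace G ` T"]) auto
qed

lemma S_primitive_if_rational_closure_primitive:
  assumes "S_primitive G (rational_closure G S)"
  shows "S_primitive G S"
  using assms S_subgroup_rational_closure unfolding S_primitive_def by simp

lemma rational_closure_primitive_if_S_primitive:
  assumes "S_primitive G S"
  shows "S_primitive G (rational_closure G S)"
  unfolding S_primitive_def
proof (intro allI impI)
  fix H assume "S_subgroup G (rational_closure G S) H"
  then obtain T where H: "subgroup H G" "T \<subseteq> trace G ` S" "H = \<Union>T"
    unfolding S_subgroup_def rational_closure_def by blast
  show "H = {\<one>} \<or> H = carrier G"
  proof (cases "H = {\<one>}")
    case False
    then obtain y where "y \<in> H" "y \<noteq> \<one>"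
      using subgroup.one_closed[OF H(1)] by blast
    then obtain t where "t \<in> T" "y \<in> t"
      using H(3) by blast
    then obtain W where W: "W \<in> S" "trace G W \<subseteq> H" "y \<in> trace G W"
      using H(2,3) by blast
    then have "W \<noteq> {\<one>}"
      using trace_one \<open>y \<noteq> \<one>\<close> by auto
    moreover have "W \<subseteq> H"
      using subset_trace[OF basic_subset_carrier[OF W(1)]] W(2) by (rule subset_trans)
    ultimately show ?thesis
      using S_primitive_basic_generates[OF assms W(1) _ H(1)] by simp
  qed simp
qed

end

theorem proposition3p2:
  fixes G :: "('a, 'b) monoid_scheme" and S :: "'a set set"
  assumes "group G" and "finite (carrier G)"
    and "central_S_ring G S"
  shows "S_primitive G S \<longleftrightarrow> S_primitive G (rational_closure G S)"
proof -
  interpret finite_S_ring G S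
    by (rule finite_S_ring.intro)
      (use assms in \<open>simp_all add: finite_S_ring_axioms_def central_S_ring_def\<close>)
  show ?thesis
    using rational_closure_primitive_if_S_primitive S_primitive_if_rational_closure_primitive
    by (rule iffI)
qed

end
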